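(* Let $A:\mathbb{R}^n\rightrightarrows\mathbb{R}^n$ be a maximally monotone symmetric linear relation. Then $q_A^*=q_{A^{-1}}$, that is, $$q_A^*(y)=\begin{cases}\frac12\langle y,A^{-1}y\rangle,& y\in\operatorname{ran}A,\\ \infty,& y\notin\operatorname{ran}A.\end{cases}$$ Consequently, $$q_A^{**}(x)=\begin{cases}\frac12\langle x,Ax\rangle,& x\in\operatorname{ran}A^{-1},\\ \infty,& x\notin\operatorname{ran}A^{-1},\end{cases}$$ so $q_A^{**}=q_A$, and $q_A$ is lower semicontinuous and convex.
   Context: A linear relation is an operator $A:\mathbb{R}^n\rightrightarrows\mathbb{R}^n$ whose graph is a linear subspace of $\mathbb{R}^n\times\mathbb{R}^n$; monotone means $\langle x^*-y^*,x-y\rangle\ge0$ on the graph; maximally monotone means no monotone operator has strictly larger graph; symmetric means $\langle x,y^*\rangle=\langle y,x^*\rangle$ for all $(x,x^* ),(y,y^* )\in\operatorname{gra}A$. $A^{-1}$ is the set-valued inverse (graph reversed). For a monotone linear relation $B$, $q_B(x)=\frac12\langle x,Bx\rangle$ for $x\in\operatorname{dom}B$ (a single value) and $q_B(x)=\infty$ otherwise. $f^*(y)=\sup_x\{\langle y,x\rangle-f(x)\}$ is the Fenchel conjugate. *)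

theory Defs
  imports "HOL-Analysis.Analysis" "HOL-Library.Extended_Real"
begin

text \<open>A set-valued operator on a Euclidean space is represented by its graph,
  a set of pairs (x, x*). A linear relation is one whose graph is a linear subspace.\<close>

definition linear_relation :: "('a::euclidean_space \<times> 'a) set \<Rightarrow> bool" where
  "linear_relation G \<longleftrightarrow> subspace G"

definition monotone_op :: "('a::euclidean_space \<times> 'a) set \<Rightarrow> bool" where
  "monotone_op G \<longleftrightarrow> (\<forall>(x, xs)\<in>G. \<forall>(y, ys)\<in>G. (xs - ys) \<bullet> (x - y) \<ge> 0)"

definition maximal_monotone_op :: "('a::euclidean_space \<times> 'a) set \<Rightarrow> bool" where
  "maximal_monotone_op G \<longleftrightarrow> monotone_op G \<and>
     (\<forall>G'. monotone_op G' \<and> G \<subseteq> G' \<longrightarrow> G' = G)"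

definition symmetric_op :: "('a::euclidean_space \<times> 'a) set \<Rightarrow> bool" where
  "symmetric_op G \<longleftrightarrow> (\<forall>(x, xs)\<in>G. \<forall>(y, ys)\<in>G. x \<bullet> ys = y \<bullet> xs)"

text \<open>q_B(x) = 1/2 <x, Bx> for x in dom B (the value does not depend on the chosen
  element of Bx for a monotone linear relation), and +\<infinity> otherwise.\<close>
definition qform :: "('a::euclidean_space \<times> 'a) set \<Rightarrow> 'a \<Rightarrow> ereal" where
  "qform G x = (if x \<in> Domain G then ereal (1/2 * (x \<bullet> (SOME xs. (x, xs) \<in> G))) else \<infinity>)"

definition fenchel :: "('a::euclidean_space \<Rightarrow> ereal) \<Rightarrow> 'a \<Rightarrow> ereal" where
  "fenchel f y = (SUP x. ereal (y \<bullet> x) - f x)"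

definition lsc_fun :: "('a::euclidean_space \<Rightarrow> ereal) \<Rightarrow> bool" where
  "lsc_fun f \<longleftrightarrow> (\<forall>x. f x \<le> Liminf (at x) f)"

definition convex_fun :: "('a::euclidean_space \<Rightarrow> ereal) \<Rightarrow> bool" where
  "convex_fun f \<longleftrightarrow> convex {(x, t::real). f x \<le> ereal t}"

end

theory Submission
  imports Defs
begin

text \<open>If \<open>y \<in> A z\<close>, monotonicity and symmetry give \<open>\<langle>y, x\<rangle> - q_A(x) \<le> \<langle>y, z\<rangle>/2\<close>
  for every \<open>x \<in> dom A\<close>, with equality at \<open>x = z\<close>; hence \<open>q_A^*(y) = q_{A^-1}(y)\<close>. If
  \<open>y \<notin> ran A\<close>, choose \<open>w\<close> orthogonal to \<open>ran A\<close> with \<open>\<langle>y, w\<rangle> > 0\<close>: adding \<open>(w, 0)\<close> to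
  the graph keeps it monotone, so by maximality \<open>0 \<in> A w\<close>. Then \<open>q_A\<close> vanishes on the
  ray through \<open>w\<close> while \<open>\<langle>y, \<cdot>\<rangle>\<close> is unbounded on it, so \<open>q_A^*(y) = \<infinity>\<close>. As \<open>A^-1\<close> is
  again a maximally monotone symmetric linear relation, \<open>q_A^** = q_{A^-1}^* = q_A\<close>, and
  every Fenchel conjugate is lower semicontinuous and convex.\<close>

lemma linear_relation_converse:
  fixes G :: "('a::euclidean_space \<times> 'a) set"
  assumes "linear_relation G"
  shows "linear_relation (converse G)"
proof -
  have "converse G = (\<lambda>(x, y). (y, x)) ` G" by force
  moreover have "linear (\<lambda>(x::'a, y::'a). (y, x))" by (auto simp: linear_iff)
  ultimately show ?thesis
    using assms linear_subspace_image unfolding linear_relation_def by metis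
qed

lemma monotone_op_converse_iff:
  fixes G :: "('a::euclidean_space \<times> 'a) set"
  shows "monotone_op (converse G) \<longleftrightarrow> monotone_op G"
proof -
  have "monotone_op H \<longleftrightarrow> (\<forall>x xs y ys. (x, xs) \<in> H \<longrightarrow> (y, ys) \<in> H \<longrightarrow> 0 \<le> (xs - ys) \<bullet> (x - y))"
    for H :: "('a \<times> 'a) set"
    unfolding monotone_op_def by fast
  then show ?thesis by (metis converse_iff inner_commute)
qed

lemma maximal_monotone_op_converse:
  fixes G :: "('a::euclidean_space \<times> 'a) set"
  assumes "maximal_monotone_op G"
  shows "maximal_monotone_op (converse G)"
  using assms unfolding maximal_monotone_op_def
  by (metis converse_converse converse_mono monotone_op_converse_iff)

lemma symmetric_op_converse:
  fixes G :: "('a::euclidean_space \<times> 'a) set"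
  assumes "symmetric_op G"
  shows "symmetric_op (converse G)"
proof -
  have "symmetric_op H \<longleftrightarrow> (\<forall>x xs y ys. (x, xs) \<in> H \<longrightarrow> (y, ys) \<in> H \<longrightarrow> x \<bullet> ys = y \<bullet> xs)"
    for H :: "('a \<times> 'a) set"
    unfolding symmetric_op_def by fast
  then show ?thesis using assms by (metis converse_iff inner_commute)
qed

lemma symmetric_op_inner_image_eq:
  fixes G :: "('a::euclidean_space \<times> 'a) set"
  assumes "linear_relation G" "symmetric_op G" "(x, a) \<in> G" "(x, b) \<in> G"
  shows "x \<bullet> a = x \<bullet> b"
proof -
  have "(x, a) - (x, b) \<in> G"
    using assms(1,3,4) subspace_diff unfolding linear_relation_def by blast
  then have "(0, a - b) \<in> G" by simp
  then have "x \<bullet> (a - b) = 0 \<bullet> a"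
    using assms(2,3) unfolding symmetric_op_def by fastforce
  then show ?thesis by (simp add: inner_diff_right)
qed

lemma qform_eq:
  fixes G :: "('a::euclidean_space \<times> 'a) set"
  assumes "linear_relation G" "symmetric_op G" "(x, a) \<in> G"
  shows "qform G x = ereal (1/2 * (x \<bullet> a))"
proof -
  have "(x, SOME xs. (x, xs) \<in> G) \<in> G" using assms(3) by (rule someI)
  then have "x \<bullet> (SOME xs. (x, xs) \<in> G) = x \<bullet> a"
    using symmetric_op_inner_image_eq assms by blast
  then show ?thesis using assms(3) unfolding qform_def by force
qed

lemma monotone_op_inner_nonneg:
  fixes G :: "('a::euclidean_space \<times> 'a) set"
  assumes "monotone_op G" "(0, 0) \<in> G" "(x, xs) \<in> G"
  shows "0 \<le> xs \<bullet> x"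
  using assms unfolding monotone_op_def by fastforce

lemma maximal_monotone_op_orthogonal_Range:
  fixes G :: "('a::euclidean_space \<times> 'a) set"
  assumes lin: "linear_relation G" and max: "maximal_monotone_op G"
    and orth: "\<forall>v\<in>Range G. w \<bullet> v = 0"
  shows "(w, 0) \<in> G"
proof -
  have mono: "monotone_op G" using max unfolding maximal_monotone_op_def by simp
  have "(0, 0) \<in> G"
    using lin subspace_0 unfolding linear_relation_def by (fastforce simp: zero_prod_def)
  then have "0 \<le> xs \<bullet> x" if "(x, xs) \<in> G" for x xs
    using monotone_op_inner_nonneg mono that by blast
  moreover have "xs \<bullet> w = 0" if "(x, xs) \<in> G" for x xs
    using orth that by (force simp: inner_commute)
  ultimately have "monotone_op (insert (w, 0) G)"
    using mono unfolding monotone_op_def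
    by (fastforce simp: inner_diff_left inner_diff_right)
  then show ?thesis using max unfolding maximal_monotone_op_def by blast
qed

lemma subspace_Range:
  fixes G :: "('a::real_vector \<times> 'b::real_vector) set"
  assumes "subspace G"
  shows "subspace (Range G)"
proof -
  have "Range G = snd ` G" by force
  then show ?thesis using linear_subspace_image[OF linear_snd assms] by simp
qed

lemma exists_orthogonal_to_subspace:
  fixes y :: "'a::euclidean_space"
  assumes "subspace S" "y \<notin> S"
  obtains w where "\<forall>v\<in>S. w \<bullet> v = 0" "y \<bullet> w > 0"
proof -
  obtain p w where p: "p \<in> span S" and w: "\<And>v. v \<in> span S \<Longrightarrow> orthogonal w v"
    and y: "y = p + w"
    using orthogonal_subspace_decomp_exists by blast
  have "p \<in> S" using p span_eq_iff assms(1) by blast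
  then have "w \<noteq> 0" "p \<bullet> w = 0"
    using assms(2) y w span_base unfolding orthogonal_def by (auto simp: inner_commute)
  then have "y \<bullet> w > 0" by (simp add: y inner_add_left)
  moreover have "\<forall>v\<in>S. w \<bullet> v = 0" using w span_base unfolding orthogonal_def by blast
  ultimately show ?thesis using that by blast
qed

lemma fenchel_eq_top_along_ray:
  fixes f :: "'a::euclidean_space \<Rightarrow> ereal"
  assumes f: "\<And>t. f (t *\<^sub>R w) \<le> 0" and yw: "y \<bullet> w > 0"
  shows "fenchel f y = \<infinity>"
proof (rule ereal_top)
  fix B
  define t where "t = B / (y \<bullet> w)"
  have "ereal B = ereal (y \<bullet> (t *\<^sub>R w))" using yw by (simp add: t_def)
  also have "\<dots> \<le> ereal (y \<bullet> (t *\<^sub>R w)) - f (t *\<^sub>R w)"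
    using f[of t] by (cases "f (t *\<^sub>R w)") auto
  also have "\<dots> \<le> fenchel f y" unfolding fenchel_def by (rule SUP_upper) simp
  finally show "ereal B \<le> fenchel f y" .
qed

lemma fenchel_qform_Range:
  fixes G :: "('a::euclidean_space \<times> 'a) set"
  assumes lin: "linear_relation G" and mono: "monotone_op G" and sym: "symmetric_op G"
    and zy: "(z, y) \<in> G"
  shows "fenchel (qform G) y = ereal (1/2 * (y \<bullet> z))"
  unfolding fenchel_def
proof (rule antisym)
  show "(SUP x. ereal (y \<bullet> x) - qform G x) \<le> ereal (1/2 * (y \<bullet> z))"
  proof (rule SUP_least)
    fix x
    show "ereal (y \<bullet> x) - qform G x \<le> ereal (1/2 * (y \<bullet> z))"
    proof (cases "x \<in> Domain G")
      case False
      then show ?thesis unfolding qform_def by simp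
    next
      case True
      then obtain a where xa: "(x, a) \<in> G" by blast
      have "0 \<le> (a - y) \<bullet> (x - z)" using mono xa zy unfolding monotone_op_def by fastforce
      moreover have "x \<bullet> y = z \<bullet> a" using sym xa zy unfolding symmetric_op_def by fastforce
      \<comment> \<open>with this symmetry, the gap \<open>\<frac>1/2\<langle>y,z\<rangle> - \<langle>y,x\<rangle> + \<frac>1/2\<langle>x,a\<rangle>\<close> is \<open>\<frac>1/2\<langle>a - y, x - z\<rangle>\<close>\<close>
      ultimately have "y \<bullet> x - 1/2 * (x \<bullet> a) \<le> 1/2 * (y \<bullet> z)"
        by (simp add: inner_diff_left inner_diff_right inner_commute algebra_simps)
      then show ?thesis using qform_eq[OF lin sym xa] by simp
    qed
  qed
next
  have "ereal (1/2 * (y \<bullet> z)) = ereal (y \<bullet> z) - qform G z"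
    using qform_eq[OF lin sym zy] by (simp add: inner_commute)
  also have "\<dots> \<le> (SUP x. ereal (y \<bullet> x) - qform G x)" by (rule SUP_upper) simp
  finally show "ereal (1/2 * (y \<bullet> z)) \<le> (SUP x. ereal (y \<bullet> x) - qform G x)" .
qed

lemma fenchel_qform_not_Range:
  fixes G :: "('a::euclidean_space \<times> 'a) set"
  assumes lin: "linear_relation G" and max: "maximal_monotone_op G" and sym: "symmetric_op G"
    and y: "y \<notin> Range G"
  shows "fenchel (qform G) y = \<infinity>"
proof -
  have sub: "subspace G" using lin unfolding linear_relation_def .
  obtain w where orth: "\<forall>v\<in>Range G. w \<bullet> v = 0" and yw: "y \<bullet> w > 0"
    using exists_orthogonal_to_subspace[OF subspace_Range[OF sub] y] by blast
  have "(w, 0) \<in> G" using maximal_monotone_op_orthogonal_Range[OF lin max orth] .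
  then have ray: "(t *\<^sub>R w, 0) \<in> G" for t
    using subspace_scale[OF sub, of "(w, 0)" t] by simp
  have "qform G (t *\<^sub>R w) \<le> 0" for t
    using qform_eq[OF lin sym ray[of t]] by simp
  then show ?thesis using fenchel_eq_top_along_ray yw by blast
qed

lemma fenchel_qform:
  fixes G :: "('a::euclidean_space \<times> 'a) set"
  assumes "linear_relation G" and max: "maximal_monotone_op G" and "symmetric_op G"
  shows "fenchel (qform G) = qform (converse G)"
proof
  fix y
  have mono: "monotone_op G" using max unfolding maximal_monotone_op_def by simp
  show "fenchel (qform G) y = qform (converse G) y"
  proof (cases "y \<in> Range G")
    case True
    then obtain z where zy: "(z, y) \<in> G" by blast
    have "qform (converse G) y = ereal (1/2 * (y \<bullet> z))"
      using qform_eq[OF linear_relation_converse[OF assms(1)] symmetric_op_converse[OF assms(3)]] zy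
      by simp
    then show ?thesis using fenchel_qform_Range[OF assms(1) mono assms(3) zy] by simp
  next
    case False
    then show ?thesis
      using fenchel_qform_not_Range[OF assms] unfolding qform_def by simp
  qed
qed

lemma lsc_fun_fenchel:
  fixes h :: "'a::euclidean_space \<Rightarrow> ereal"
  shows "lsc_fun (fenchel h)"
  unfolding lsc_fun_def
proof
  fix x
  have "(SUP y. ereal (x \<bullet> y) - h y) \<le> Liminf (at x) (fenchel h)"
  proof (rule SUP_least)
    fix y
    let ?g = "\<lambda>x. ereal (x \<bullet> y) - h y"
    have "(?g \<longlongrightarrow> ?g x) (at x)"
    proof (cases "h y")
      case (real c)
      have "((\<lambda>x. ereal (x \<bullet> y - c)) \<longlongrightarrow> ereal (x \<bullet> y - c)) (at x)"
        by (intro tendsto_ereal tendsto_intros)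
      then show ?thesis using real by simp
    qed simp_all
    then have "?g x = Liminf (at x) ?g"
      using lim_imp_Liminf by force
    also have "\<dots> \<le> Liminf (at x) (fenchel h)"
      by (intro Liminf_mono always_eventually allI)
        (unfold fenchel_def, rule SUP_upper2[of y], auto)
    finally show "?g x \<le> Liminf (at x) (fenchel h)" .
  qed
  then show "fenchel h x \<le> Liminf (at x) (fenchel h)"
    unfolding fenchel_def[of h x] .
qed

lemma convex_fun_fenchel:
  fixes h :: "'a::euclidean_space \<Rightarrow> ereal"
  shows "convex_fun (fenchel h)"
proof -
  have epi: "{(x, t). fenchel h x \<le> ereal t} = (\<Inter>y. {(x, t). ereal (x \<bullet> y) - h y \<le> ereal t})"
    by (auto simp: fenchel_def SUP_le_iff)
  have "convex {(x, t). ereal (x \<bullet> y) - h y \<le> ereal t}" for y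
  proof (cases "h y")
    case (real c)
    then have "{(x, t). ereal (x \<bullet> y) - h y \<le> ereal t} = {p. (y, -1) \<bullet> p \<le> c}"
      by (auto simp: inner_prod_def inner_commute)
    then show ?thesis using convex_halfspace_le by metis
  qed simp_all
  then show ?thesis unfolding convex_fun_def epi by (rule convex_INT)
qed

theorem proposition4p25:
  fixes G :: "('a::euclidean_space \<times> 'a) set"
  assumes "linear_relation G" and "maximal_monotone_op G" and "symmetric_op G"
  shows "fenchel (qform G) = qform (converse G) \<and>
    (\<forall>y. fenchel (qform G) y =
           (if y \<in> Range G then ereal (1/2 * (y \<bullet> (SOME x. (y, x) \<in> converse G))) else \<infinity>)) \<and>
    (\<forall>x. fenchel (fenchel (qform G)) x =
           (if x \<in> Range (converse G) then ereal (1/2 * (x \<bullet> (SOME xs. (x, xs) \<in> G))) else \<infinity>)) \<and>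
    fenchel (fenchel (qform G)) = qform G \<and>
    lsc_fun (qform G) \<and>
    convex_fun (qform G)"
proof -
  have conj: "fenchel (qform G) = qform (converse G)" by (rule fenchel_qform[OF assms])
  have "fenchel (qform (converse G)) = qform G"
    using fenchel_qform[OF linear_relation_converse maximal_monotone_op_converse
        symmetric_op_converse, OF assms] by simp
  then have biconj: "fenchel (fenchel (qform G)) = qform G" by (simp add: conj)
  have "lsc_fun (qform G)" using lsc_fun_fenchel[of "fenchel (qform G)"] unfolding biconj .
  moreover have "convex_fun (qform G)"
    using convex_fun_fenchel[of "fenchel (qform G)"] unfolding biconj .
  ultimately show ?thesis using conj biconj by (auto simp: qform_def fun_eq_iff)
qed

end
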